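(* Let $\frac13<q<1$ and let $a>0$. Define the probability distribution $p^{(a)}=(p^{(a)}_k)_{k\in\mathbb{Z}}$ on $\mathbb{Z}$ by $$p^{(a)}_k=f_q(a)^{-1}\Big(1+\frac{k^2}{a^2}\Big)^{\frac{1}{q-1}},\qquad f_q(a)=\sum_{k\in\mathbb{Z}}\Big(1+\frac{k^2}{a^2}\Big)^{\frac{1}{q-1}} .$$ Then $p^{(a)}$ has zero mean and finite variance $\sigma^2=\sum_{k\in\mathbb{Z}}k^2p^{(a)}_k$, and $p^{(a)}$ maximizes the Tsallis entropy $H_q$ over all probability distributions $p$ on $\mathbb{Z}$ satisfying $\sum_{k}k\,p_k=0$ and $\sum_k k^2p_k=\sigma^2$.
   Context: For a probability distribution $p=(p_k)_{k\in\mathbb{Z}}$ on $\mathbb{Z}$ and $q\neq 1$, the Tsallis entropy is $H_q(p)=\frac{1}{q-1}\big(1-\sum_{k\in\mathbb{Z}}p_k^q\big)$. In the paper $a^2=k_BT=1/\beta$ is interpreted as a temperature and $\sum_k k^2 p_k$ as the mean energy $U$. *)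

theory Defs
  imports "HOL-Analysis.Analysis"
begin

definition prob_dist_Z :: "(int \<Rightarrow> real) \<Rightarrow> bool" where
  "prob_dist_Z p \<longleftrightarrow> (\<forall>k. 0 \<le> p k) \<and> (p has_sum 1) UNIV"

definition tsallis :: "real \<Rightarrow> (int \<Rightarrow> real) \<Rightarrow> real" where
  "tsallis q p = (1 - (\<Sum>\<^sub>\<infinity>k. p k powr q)) / (q - 1)"

definition fq :: "real \<Rightarrow> real \<Rightarrow> real" where
  "fq q a = (\<Sum>\<^sub>\<infinity>k::int. (1 + (of_int k)^2 / a^2) powr (1 / (q - 1)))"

definition pa :: "real \<Rightarrow> real \<Rightarrow> int \<Rightarrow> real" where
  "pa q a k = (1 + (of_int k)^2 / a^2) powr (1 / (q - 1)) / fq q a"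

end

theory Submission
  imports Defs
begin

text \<open>
  For \<open>0 < q < 1\<close> the map \<open>x \<mapsto> x\<^sup>q\<close> is concave, so its tangent at \<open>\<pi>\<^sub>k > 0\<close> gives
  \<open>p\<^sub>k\<^sup>q \<le> (1 - q) \<pi>\<^sub>k\<^sup>q + q \<pi>\<^sub>k\<^bsup>q-1\<^esup> p\<^sub>k\<close>.
  For \<open>\<pi> = pa q a\<close> the weight \<open>\<pi>\<^sub>k\<^bsup>q-1\<^esup> = f\<^sub>q(a)\<^bsup>1-q\<^esup> (1 + k\<^sup>2/a\<^sup>2)\<close> is affine in \<open>k\<^sup>2\<close>,
  so summing the tangent bound over \<open>k\<close> gives a right-hand side depending on \<open>p\<close> only through
  \<open>\<Sum> p\<^sub>k\<close> and \<open>\<Sum> k\<^sup>2 p\<^sub>k\<close>; when these agree with those of \<open>\<pi>\<close> it equals \<open>\<Sum> \<pi>\<^sub>k\<^sup>q\<close>. Since \<open>pa q a k\<close> decays like \<open>|k|\<^bsup>-2/(1-q)\<^esup>\<close>,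
  the second moment is finite precisely for \<open>q > 1/3\<close>; the mean vanishes by symmetry.
\<close>

lemma summable_on_int_abs_powr:
  fixes r :: real
  assumes "r < -1"
  shows "(\<lambda>k::int. \<bar>real_of_int k\<bar> powr r) summable_on UNIV"
proof -
  let ?f = "\<lambda>k::int. \<bar>real_of_int k\<bar> powr r"
  have nat: "(\<lambda>n. real n powr r) summable_on UNIV"
    using assms by (subst summable_on_UNIV_nonneg_real_iff) (auto simp: summable_real_powr_iff)
  have pos: "?f summable_on range int"
    using nat by (subst summable_on_reindex) (auto simp: o_def)
  have neg: "?f summable_on range (\<lambda>n. - int n)"
    using nat by (subst summable_on_reindex) (auto simp: o_def inj_on_def)
  have "k \<in> range int \<union> range (\<lambda>n. - int n)" for k
    by (cases k rule: int_cases2) auto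
  then have "range int \<union> range (\<lambda>n. - int n) = UNIV"
    by blast
  then show ?thesis
    using summable_on_union[OF pos neg] by simp
qed

lemma summable_on_int_power_mult_powr:
  fixes a e :: real and n :: nat
  assumes a: "0 < a" and e: "real n + 2 * e < -1"
  shows "(\<lambda>k::int. (of_int k)^n * (1 + (of_int k)^2 / a^2) powr e) summable_on UNIV"
proof -
  let ?f = "\<lambda>k::int. (of_int k)^n * (1 + (of_int k)^2 / a^2) powr e"
  let ?g = "\<lambda>k::int. a powr (- 2 * e) * \<bar>real_of_int k\<bar> powr (real n + 2 * e)"
  have bound: "norm (?f k) \<le> ?g k" if "k \<noteq> 0" for k
  proof -
    define x where "x = \<bar>real_of_int k\<bar>"
    have x: "0 < x"
      using that by (simp add: x_def)
    have x2: "x^2 / a^2 = (x / a) powr 2"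
      using a x by (simp add: powr_realpow' power_divide)
    have "norm (?f k) = x ^ n * (1 + x^2 / a^2) powr e"
      by (simp add: x_def abs_mult power_abs)
    also have "\<dots> \<le> x ^ n * (x^2 / a^2) powr e"
      using e a x by (intro mult_left_mono powr_mono2') auto
    also have "\<dots> = x powr n * (x / a) powr (2 * e)"
      unfolding x2 using x by (simp only: powr_powr powr_realpow mult.commute)
    also have "\<dots> = a powr (- 2 * e) * x powr (real n + 2 * e)"
      using a x by (simp add: powr_divide[of x a] powr_add powr_minus field_simps)
    finally show ?thesis
      by (simp add: x_def)
  qed
  have "?g summable_on (UNIV - {0})"
    using summable_on_cmult_right[OF summable_on_int_abs_powr[OF e]] by (rule summable_on_subset) auto
  then have "(\<lambda>k. norm (?f k)) summable_on (UNIV - {0})"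
    by (rule summable_on_comparison_test) (use bound in auto)
  then have "(\<lambda>k. norm (?f k)) summable_on insert 0 (UNIV - {0})"
    by (subst summable_on_insert_iff)
  then have "(\<lambda>k. norm (?f k)) summable_on UNIV"
    by (simp only: insert_Diff_single insert_UNIV)
  then show ?thesis
    by (rule abs_summable_summable)
qed

lemma has_sum_zero_if_odd:
  fixes f :: "int \<Rightarrow> 'a::real_normed_vector"
  assumes "f summable_on UNIV" and odd: "\<And>k. f (- k) = - f k"
  shows "(f has_sum 0) UNIV"
proof -
  obtain S where S: "(f has_sum S) UNIV"
    using assms(1) by (auto simp: summable_on_def)
  have "((\<lambda>k. f (- k)) has_sum S) UNIV"
    using S has_sum_reindex_bij_witness[of UNIV uminus uminus UNIV f "\<lambda>k. f (- k)" S S] by simp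
  then have "(f has_sum - S) UNIV"
    unfolding odd has_sum_uminus .
  then have "S = - S"
    by (rule has_sum_unique[OF S])
  then have "S = 0"
    by (metis add_eq_0_iff scaleR_2 scaleR_eq_0_iff zero_neq_numeral)
  then show ?thesis
    using S by simp
qed

lemma powr_le_tangent:
  fixes q x y :: real
  assumes q: "0 \<le> q" "q \<le> 1" and "0 \<le> x" and y: "0 < y"
  shows "x powr q \<le> (1 - q) * y powr q + q * y powr (q - 1) * x"
proof (cases "x = 0")
  case True
  then show ?thesis
    using q by simp
next
  case False
  then have "x powr q * y powr (1 - q) \<le> q * x + (1 - q) * y"
    using assms by (intro Youngs_inequality_0) auto
  then have "x powr q * y powr (1 - q) * y powr (q - 1) \<le> (q * x + (1 - q) * y) * y powr (q - 1)"
    by (rule mult_right_mono) simp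
  moreover have "y powr (1 - q) * y powr (q - 1) = 1" "y * y powr (q - 1) = y powr q"
    using y by (simp_all flip: powr_add add: powr_mult_base)
  ultimately show ?thesis
    by (simp add: algebra_simps)
qed

lemma infsum_powr_le_by_tangent:
  fixes \<pi> p :: "'a \<Rightarrow> real"
  assumes q: "0 \<le> q" "q \<le> 1" and \<pi>: "\<And>k. 0 < \<pi> k" and p: "\<And>k. 0 \<le> p k"
    and sum_\<pi>: "((\<lambda>k. \<pi> k powr q) has_sum P) A"
    and sum_p: "((\<lambda>k. \<pi> k powr (q - 1) * p k) has_sum P) A"
  shows "(\<lambda>k. p k powr q) summable_on A" and "(\<Sum>\<^sub>\<infinity>k\<in>A. p k powr q) \<le> P"
proof -
  let ?G = "\<lambda>k. (1 - q) * \<pi> k powr q + q * (\<pi> k powr (q - 1) * p k)"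
  have G: "(?G has_sum ((1 - q) * P + q * P)) A"
    by (intro has_sum_add has_sum_cmult_right sum_\<pi> sum_p)
  then have G: "(?G has_sum P) A"
    by (simp add: algebra_simps)
  have le: "p k powr q \<le> ?G k" for k
    using powr_le_tangent[OF q p \<pi>] by (simp add: mult.assoc)
  show summable: "(\<lambda>k. p k powr q) summable_on A"
    using G by (rule summable_on_comparison_test[OF has_sum_imp_summable]) (simp_all add: le)
  show "(\<Sum>\<^sub>\<infinity>k\<in>A. p k powr q) \<le> P"
    using has_sum_mono[OF has_sum_infsum[OF summable] G] le by simp
qed

lemma fq_has_sum:
  assumes "-1 < q" "q < 1" "0 < a"
  shows "((\<lambda>k. (1 + (of_int k)^2 / a^2) powr (1 / (q - 1))) has_sum fq q a) UNIV"
proof -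
  have "real 0 + 2 * (1 / (q - 1)) < -1"
    using assms by (simp add: field_simps)
  from summable_on_int_power_mult_powr[OF \<open>0 < a\<close> this] show ?thesis
    by (simp add: fq_def)
qed

lemma fq_pos:
  assumes "-1 < q" "q < 1" "0 < a"
  shows "0 < fq q a"
proof -
  let ?u = "\<lambda>k::int. (1 + (of_int k)^2 / a^2) powr (1 / (q - 1))"
  have "(\<Sum>\<^sub>\<infinity>k\<in>{0}. ?u k) \<le> (\<Sum>\<^sub>\<infinity>k\<in>UNIV. ?u k)"
    using fq_has_sum[OF assms] by (intro infsum_mono_neutral) (auto intro: has_sum_imp_summable)
  then show ?thesis
    by (simp add: fq_def)
qed

lemma pa_pos:
  assumes "-1 < q" "q < 1" "0 < a"
  shows "0 < pa q a k"
proof -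
  have "0 < 1 + (of_int k)^2 / a^2"
    by (simp add: add_pos_nonneg)
  then show ?thesis
    using fq_pos[OF assms] by (simp add: pa_def)
qed

lemma prob_dist_Z_pa:
  assumes "-1 < q" "q < 1" "0 < a"
  shows "prob_dist_Z (pa q a)"
proof -
  have "(pa q a has_sum fq q a / fq q a) UNIV"
    unfolding pa_def by (intro has_sum_cmult_left[where c = "1 / fq q a", simplified] fq_has_sum assms)
  then show ?thesis
    using pa_pos[OF assms] fq_pos[OF assms] by (simp add: prob_dist_Z_def less_imp_le)
qed

lemma summable_on_pa_moment:
  fixes n :: nat
  assumes "real n + 2 / (q - 1) < -1" "0 < a"
  shows "(\<lambda>k. (of_int k)^n * pa q a k) summable_on UNIV"
  using summable_on_cmult_left[OF summable_on_int_power_mult_powr[of a n "1 / (q - 1)"], of "1 / fq q a"]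
    assms by (simp add: pa_def)

lemma pa_mean_zero:
  assumes "0 < q" "q < 1" "0 < a"
  shows "((\<lambda>k. of_int k * pa q a k) has_sum 0) UNIV"
proof (rule has_sum_zero_if_odd)
  have "real 1 + 2 / (q - 1) < -1"
    using assms by (simp add: field_simps)
  from summable_on_pa_moment[OF this \<open>0 < a\<close>]
  show "(\<lambda>k. of_int k * pa q a k) summable_on UNIV"
    by simp
qed (simp add: pa_def)

lemma pa_powr_q_minus_1:
  assumes "-1 < q" "q < 1" "0 < a"
  shows "pa q a k powr (q - 1) = fq q a powr (1 - q) * (1 + (of_int k)^2 / a^2)"
proof -
  have u: "0 < 1 + (of_int k)^2 / a^2"
    by (simp add: add_pos_nonneg)
  have "pa q a k powr (q - 1) = (1 + (of_int k)^2 / a^2) / fq q a powr (q - 1)"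
    using assms u fq_pos[OF assms] by (simp add: pa_def powr_divide powr_powr)
  then show ?thesis
    by (simp add: powr_minus_divide[symmetric] divide_inverse powr_minus[symmetric])
qed

lemma has_sum_pa_powr_mult:
  assumes "-1 < q" "q < 1" "0 < a"
    and r1: "(r has_sum 1) UNIV" and r2: "((\<lambda>k. (of_int k)^2 * r k) has_sum U) UNIV"
  shows "((\<lambda>k. pa q a k powr (q - 1) * r k) has_sum fq q a powr (1 - q) * (1 + U / a^2)) UNIV"
proof -
  have "((\<lambda>k. fq q a powr (1 - q) * (r k + (1 / a^2) * ((of_int k)^2 * r k)))
          has_sum fq q a powr (1 - q) * (1 + (1 / a^2) * U)) UNIV"
    by (intro has_sum_cmult_right has_sum_add r1 r2)
  then show ?thesis
    by (simp add: pa_powr_q_minus_1[OF assms(1-3)] algebra_simps)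
qed

lemma tsallis_le_tsallis_pa:
  assumes q: "0 \<le> q" "q < 1" and a: "0 < a"
    and var: "((\<lambda>k. (of_int k)^2 * pa q a k) has_sum \<sigma>2) UNIV"
    and p: "prob_dist_Z p" and p2: "((\<lambda>k. (of_int k)^2 * p k) has_sum \<sigma>2) UNIV"
  shows "tsallis q p \<le> tsallis q (pa q a)"
proof -
  have q': "-1 < q"
    using q by simp
  note escort = has_sum_pa_powr_mult[OF q' q(2) a]
  let ?P = "fq q a powr (1 - q) * (1 + \<sigma>2 / a^2)"
  have "pa q a k powr (q - 1) * pa q a k = pa q a k powr q" for k
    using pa_pos[OF q' q(2) a, of k] by (simp add: powr_mult_base mult.commute)
  then have sum_pa: "((\<lambda>k. pa q a k powr q) has_sum ?P) UNIV"
    using escort[OF _ var] prob_dist_Z_pa[OF q' q(2) a] by (simp add: prob_dist_Z_def)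
  have "(\<Sum>\<^sub>\<infinity>k. p k powr q) \<le> ?P"
    using infsum_powr_le_by_tangent(2)[OF q(1) _ pa_pos[OF q' q(2) a] _ sum_pa escort[OF _ p2]] p q
    by (simp add: prob_dist_Z_def)
  also have "?P = (\<Sum>\<^sub>\<infinity>k. pa q a k powr q)"
    using sum_pa by (simp add: infsumI)
  finally show ?thesis
    unfolding tsallis_def using q by (simp add: divide_right_mono_neg)
qed

theorem theorem1:
  fixes q a :: real
  assumes "1/3 < q" and "q < 1" and "0 < a"
  shows "prob_dist_Z (pa q a)
    \<and> ((\<lambda>k. of_int k * pa q a k) has_sum 0) UNIV
    \<and> (\<exists>\<sigma>2. ((\<lambda>k. (of_int k)^2 * pa q a k) has_sum \<sigma>2) UNIV
         \<and> (\<forall>p. prob_dist_Z p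
               \<and> ((\<lambda>k. of_int k * p k) has_sum 0) UNIV
               \<and> ((\<lambda>k. (of_int k)^2 * p k) has_sum \<sigma>2) UNIV
               \<longrightarrow> tsallis q p \<le> tsallis q (pa q a)))"
proof -
  have q: "-1 < q" "0 < q" "q < 1" "real 2 + 2 / (q - 1) < -1"
    using assms by (simp_all add: field_simps)
  obtain \<sigma>2 where var: "((\<lambda>k. (of_int k)^2 * pa q a k) has_sum \<sigma>2) UNIV"
    using summable_on_pa_moment[OF q(4) \<open>0 < a\<close>] by (auto simp: summable_on_def)
  then show ?thesis
    using prob_dist_Z_pa[OF q(1,3) \<open>0 < a\<close>] pa_mean_zero[OF q(2,3) \<open>0 < a\<close>]
      tsallis_le_tsallis_pa[OF less_imp_le[OF q(2)] q(3) \<open>0 < a\<close> var] by blast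
qed

end
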